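(* Let $\mathcal A$ be a unital $C^*$-algebra, $p,q\in\mathcal A$ projections, $a\in\mathcal A$ invertible up to $(p,q)$, and $b$ a $(p,q)$-inverse of $a$. (a) For every $c\in\mathcal A$ with $\|c\|<\|b\|^{-1}$, the element $a+c$ is invertible up to $(p,q)$, and its $(p,q)$-inverse $b_1$ satisfies $\|b_1\|\le \dfrac{\|b\|}{1-\|b\|\,\|c\|}$. (b) Let $C=2\bigl(1+\sum_{n\ge1}|\alpha_n|2^{-(n-1)}\bigr)$, where $\alpha_n$ are the Taylor coefficients of $t\mapsto(1+t)^{-1/2}$ at $0$. If $p',q'\in\mathcal A$ are projections with $\|p-p'\|,\|q-q'\|<\min\{1/2,\,1/(4C\|a\|\,\|b\|)\}$, then $a$ is invertible up to $(p',q')$, and its $(p',q')$-inverse $b'$ satisfies $\|b'\|\le 2\|b\|$.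
   Context: For $a\in\mathcal A$ and projections $p,q$ in a unital $C^*$-algebra $\mathcal A$, $a$ is invertible up to $(p,q)$ if there is $b\in\mathcal A$ with $b=(1-p)b(1-q)$, $(1-q)a(1-p)b=1-q$ and $b(1-q)a(1-p)=1-p$; such $b$ is called a $(p,q)$-inverse of $a$ (it is unique). The constant $C$ is the one for which, for any projections $P,Q$ with $\|P-Q\|<1/2$, there is a unitary $U\in C^*(I,P,Q)$ with $U^*PU=Q$ and $\|I-U\|\le C\|P-Q\|$. *)

theory Defs
  imports "HOL-Analysis.Analysis"
begin

text \<open>The complex scalar multiplication is given explicitly; real scaling is its restriction.\<close>

class cstar_algebra = real_normed_algebra_1 + banach +
  fixes star :: "'a \<Rightarrow> 'a"
    and cscale :: "complex \<Rightarrow> 'a \<Rightarrow> 'a"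
  assumes cscale_add_left: "cscale (\<alpha> + \<beta>) x = cscale \<alpha> x + cscale \<beta> x"
    and cscale_add_right: "cscale \<alpha> (x + y) = cscale \<alpha> x + cscale \<alpha> y"
    and cscale_cscale: "cscale \<alpha> (cscale \<beta> x) = cscale (\<alpha> * \<beta>) x"
    and cscale_of_real: "cscale (complex_of_real r) x = scaleR r x"
    and norm_cscale: "norm (cscale \<alpha> x) = cmod \<alpha> * norm x"
    and cscale_mult_left: "cscale \<alpha> (x * y) = cscale \<alpha> x * y"
    and cscale_mult_right: "cscale \<alpha> (x * y) = x * cscale \<alpha> y"
    and star_star: "star (star x) = x"
    and star_add: "star (x + y) = star x + star y"
    and star_cscale: "star (cscale \<alpha> x) = cscale (cnj \<alpha>) (star x)"
    and star_mult: "star (x * y) = star y * star x"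
    and cstar_identity: "norm (star x * x) = (norm x)\<^sup>2"

definition is_projection :: "'a::cstar_algebra \<Rightarrow> bool" where
  "is_projection p \<longleftrightarrow> star p = p \<and> p * p = p"

definition is_pq_inverse :: "'a::cstar_algebra \<Rightarrow> 'a \<Rightarrow> 'a \<Rightarrow> 'a \<Rightarrow> bool" where
  "is_pq_inverse a p q b \<longleftrightarrow>
     b = (1 - p) * b * (1 - q) \<and>
     (1 - q) * a * (1 - p) * b = 1 - q \<and>
     b * (1 - q) * a * (1 - p) = 1 - p"

definition invertible_upto :: "'a::cstar_algebra \<Rightarrow> 'a \<Rightarrow> 'a \<Rightarrow> bool" where
  "invertible_upto a p q \<longleftrightarrow> (\<exists>b. is_pq_inverse a p q b)"

text \<open>Taylor coefficients of (1+t) powr (-1/2) at 0 (binomial series coefficients).\<close>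
definition alpha_coeff :: "nat \<Rightarrow> real" where
  "alpha_coeff n = ((-1/2::real) gchoose n)"

definition C_const :: real where
  "C_const = 2 * (1 + (\<Sum>n. \<bar>alpha_coeff (Suc n)\<bar> * (1/2) ^ n))"

end

theory Submission
  imports Defs
begin

text \<open>
  (a) By a Neumann series, \<open>(1 + b c)\<inverse> b\<close> is a left \<open>(p,q)\<close>-inverse of \<open>a + c\<close>.
  The same construction applied to the adjoints yields a right one, and a left and a right
  \<open>(p,q)\<close>-inverse always coincide.

  (b) Instead of conjugating by the unitary of the paper, compress directly: with
  \<open>P' = 1 - p'\<close>, \<open>Q' = 1 - q'\<close>, the element \<open>x = P' b Q' a P'\<close> lies within
  \<open>\<parallel>p - p'\<parallel>\<^sup>2 + \<parallel>a\<parallel> \<parallel>b\<parallel> (\<parallel>p - p'\<parallel> + \<parallel>q - q'\<parallel>) < 1/2\<close> of \<open>P'\<close>, so \<open>x\<close> has a left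
  inverse \<open>y\<close> of norm at most 2 in the corner algebra \<open>P' \<A> P'\<close>, and \<open>y b Q'\<close> is a left
  \<open>(p',q')\<close>-inverse of \<open>a\<close>; adjoints again supply the right inverse. The hypotheses involving
  \<open>C\<close> enter only through \<open>C \<ge> 2\<close>.
\<close>

lemma star_zero [simp]: "star (0::'a::cstar_algebra) = 0"
  by (metis add_cancel_right_right star_add)

lemma star_minus: "star (- x) = - star (x::'a::cstar_algebra)"
  by (metis add.right_inverse add_eq_0_iff star_add star_zero)

lemma star_diff: "star (x - y) = star x - star (y::'a::cstar_algebra)"
  by (metis diff_conv_add_uminus star_add star_minus)

lemma star_one [simp]: "star (1::'a::cstar_algebra) = 1"
  by (metis mult.right_neutral star_mult star_star)

lemma norm_star [simp]: "norm (star x) = norm (x::'a::cstar_algebra)"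
proof -
  have le: "norm y \<le> norm (star y)" for y :: 'a
  proof (cases "y = 0")
    case False
    have "norm y * norm y \<le> norm (star y) * norm y"
      by (metis cstar_identity norm_mult_ineq power2_eq_square)
    then show ?thesis using False by simp
  qed simp
  show ?thesis by (metis le star_star order.antisym)
qed

lemma is_projection_compl: "is_projection p \<Longrightarrow> is_projection (1 - p)"
  unfolding is_projection_def by (simp add: star_diff algebra_simps)

lemma projection_compl_idem: "is_projection p \<Longrightarrow> (1 - p) * (1 - p) = 1 - p"
  using is_projection_compl unfolding is_projection_def by blast

lemma star_compl_projection: "is_projection p \<Longrightarrow> star (1 - p) = 1 - p"
  using is_projection_compl unfolding is_projection_def by blast

lemma norm_projection_le_one: "is_projection (p::'a::cstar_algebra) \<Longrightarrow> norm p \<le> 1"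
  unfolding is_projection_def
  by (metis cstar_identity mult_left_le_imp_le mult_1_right norm_ge_zero order.refl
      power2_eq_square zero_le_one zero_less_norm_iff norm_zero)

lemma norm_mult_le_left_of_norm_le_one:
  "norm (x::'a::real_normed_algebra) \<le> 1 \<Longrightarrow> norm (x * y) \<le> norm y"
  by (metis mult_left_le_one_le norm_ge_zero norm_mult_ineq order_trans)

lemma norm_mult_le_right_of_norm_le_one:
  "norm (x::'a::real_normed_algebra) \<le> 1 \<Longrightarrow> norm (y * x) \<le> norm y"
  by (metis mult_left_le norm_ge_zero norm_mult_ineq order_trans)

lemma norm_mult_contractions_le:
  fixes u v y :: "'a::real_normed_algebra"
  shows "norm u \<le> 1 \<Longrightarrow> norm v \<le> 1 \<Longrightarrow> norm (u * y * v) \<le> norm y"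
  by (meson norm_mult_le_left_of_norm_le_one norm_mult_le_right_of_norm_le_one order_trans)

lemma corner_absorb:
  fixes b e f :: "'a::monoid_mult"
  assumes "e * e = e" "f * f = f" "b = e * b * f"
  shows "e * b = b" "b * f = b"
  by (metis assms mult.assoc)+

lemma neumann_series_inverse:
  fixes x :: "'a::{real_normed_algebra_1, banach}"
  assumes "norm x < 1"
  obtains z where "(1 + x) * z = 1" "z * (1 + x) = 1" "norm z \<le> 1 / (1 - norm x)"
proof -
  define f where "f n = (- x) ^ n" for n
  have norm_f: "norm (f n) \<le> norm x ^ n" for n
    unfolding f_def using norm_power_ineq[of "- x" n] by simp
  have geometric: "summable (\<lambda>n. norm x ^ n)"
    using assms by (simp add: summable_geometric)
  have "summable (\<lambda>n. norm (f n))"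
    by (rule summable_comparison_test'[OF geometric]) (use norm_f in auto)
  then have summable_f: "summable f" and summable_norm_f: "summable (\<lambda>n. norm (f n))"
    by (simp_all add: summable_norm_cancel)
  define z where "z = suminf f"
  have tail: "(\<Sum>n. f (Suc n)) = z - 1"
    unfolding z_def using suminf_split_head[OF summable_f] by (simp add: f_def)
  have "(- x) * z = (\<Sum>n. f (Suc n))"
    unfolding z_def suminf_mult[OF summable_f, symmetric] by (simp add: f_def)
  then have left: "(1 + x) * z = 1"
    using tail by (simp add: algebra_simps)
  have "z * (- x) = (\<Sum>n. f (Suc n))"
    unfolding z_def suminf_mult2[OF summable_f] by (simp add: f_def power_Suc2 del: power_Suc)
  then have right: "z * (1 + x) = 1"
    using tail by (simp add: algebra_simps)
  have "norm z \<le> (\<Sum>n. norm (f n))"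
    unfolding z_def by (rule summable_norm[OF summable_norm_f])
  also have "\<dots> \<le> (\<Sum>n. norm x ^ n)"
    by (rule suminf_le[OF norm_f summable_norm_f geometric])
  also have "\<dots> = 1 / (1 - norm x)"
    using assms by (simp add: suminf_geometric)
  finally show ?thesis
    using that left right by blast
qed

lemma corner_left_inverse:
  fixes e x :: "'a::{real_normed_algebra_1, banach}"
  assumes e: "e * e = e" "norm e \<le> 1" and x: "e * x = x" "x * e = x"
    and close: "norm (x - e) < 1"
  obtains y where "y * x = e" "e * y = y" "y * e = y" "norm y \<le> 1 / (1 - norm (x - e))"
proof -
  obtain z where z: "(1 + (x - e)) * z = 1" "z * (1 + (x - e)) = 1"
    and norm_z: "norm z \<le> 1 / (1 - norm (x - e))"
    using neumann_series_inverse[OF close] by blast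
  have commute: "(1 + (x - e)) * e = e * (1 + (x - e))"
    using e(1) x by (simp add: algebra_simps)
  \<comment> \<open>\<open>1 + (x - e)\<close> commutes with \<open>e\<close>, hence so does its inverse \<open>z\<close>\<close>
  have ze: "z * e = e * z"
  proof -
    have "z * e = z * e * ((1 + (x - e)) * z)"
      using z(1) by simp
    also have "\<dots> = z * ((1 + (x - e)) * e) * z"
      by (simp add: commute mult.assoc)
    also have "\<dots> = e * z"
      using z(2) by (simp add: mult.assoc[symmetric])
    finally show ?thesis .
  qed
  define y where "y = z * e"
  have "y * x = z * ((1 + (x - e)) * e)"
    unfolding y_def using e(1) x by (simp add: algebra_simps mult.assoc)
  then have "y * x = e"
    using z(2) by (simp add: mult.assoc[symmetric])
  moreover have "e * y = y" "y * e = y"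
    unfolding y_def using e(1) ze by (metis mult.assoc)+
  moreover have "norm y \<le> 1 / (1 - norm (x - e))"
    unfolding y_def using norm_mult_le_right_of_norm_le_one[OF e(2)] norm_z by (rule order_trans)
  ultimately show ?thesis
    using that by blast
qed

definition is_left_pq_inverse :: "'a::cstar_algebra \<Rightarrow> 'a \<Rightarrow> 'a \<Rightarrow> 'a \<Rightarrow> bool" where
  "is_left_pq_inverse a p q b \<longleftrightarrow> b = (1 - p) * b * (1 - q) \<and> b * (1 - q) * a * (1 - p) = 1 - p"

definition is_right_pq_inverse :: "'a::cstar_algebra \<Rightarrow> 'a \<Rightarrow> 'a \<Rightarrow> 'a \<Rightarrow> bool" where
  "is_right_pq_inverse a p q b \<longleftrightarrow> b = (1 - p) * b * (1 - q) \<and> (1 - q) * a * (1 - p) * b = 1 - q"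

lemma is_pq_inverse_iff_left_right:
  "is_pq_inverse a p q b \<longleftrightarrow> is_left_pq_inverse a p q b \<and> is_right_pq_inverse a p q b"
  unfolding is_pq_inverse_def is_left_pq_inverse_def is_right_pq_inverse_def by blast

lemma left_right_pq_inverse_eq:
  assumes "is_projection p" "is_projection q"
    and left: "is_left_pq_inverse a p q bl" and right: "is_right_pq_inverse a p q br"
  shows "bl = br"
proof -
  have "bl * (1 - q) = bl" "(1 - p) * br = br"
    using left right corner_absorb projection_compl_idem assms(1,2)
    unfolding is_left_pq_inverse_def is_right_pq_inverse_def by metis+
  then have "bl = bl * ((1 - q) * a * (1 - p) * br)"
    using right unfolding is_right_pq_inverse_def by simp
  also have "\<dots> = (bl * (1 - q) * a * (1 - p)) * br"
    by (simp add: mult.assoc)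
  also have "\<dots> = br"
    using left \<open>(1 - p) * br = br\<close> unfolding is_left_pq_inverse_def by simp
  finally show ?thesis .
qed

lemma pq_inverse_unique:
  assumes "is_projection p" "is_projection q" "is_pq_inverse a p q b1" "is_pq_inverse a p q b2"
  shows "b1 = b2"
  using left_right_pq_inverse_eq assms is_pq_inverse_iff_left_right by metis

lemma right_pq_inverse_star:
  assumes "is_projection p" "is_projection q" "is_left_pq_inverse a p q b"
  shows "is_right_pq_inverse (star a) q p (star b)"
proof -
  have s: "star (1 - p) = 1 - p" "star (1 - q) = 1 - q"
    using assms(1,2) by (simp_all add: star_compl_projection)
  obtain b1: "b = (1 - p) * b * (1 - q)" and b2: "b * (1 - q) * a * (1 - p) = 1 - p"
    using assms(3) unfolding is_left_pq_inverse_def by blast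
  have "star b = (1 - q) * star b * (1 - p)"
    using arg_cong[OF b1, of star] s by (simp add: star_mult mult.assoc)
  moreover have "(1 - p) * star a * (1 - q) * star b = 1 - p"
    using arg_cong[OF b2, of star] s by (simp add: star_mult mult.assoc)
  ultimately show ?thesis
    unfolding is_right_pq_inverse_def by blast
qed

lemma left_pq_inverse_star:
  assumes "is_projection p" "is_projection q" "is_right_pq_inverse a p q b"
  shows "is_left_pq_inverse (star a) q p (star b)"
proof -
  have s: "star (1 - p) = 1 - p" "star (1 - q) = 1 - q"
    using assms(1,2) by (simp_all add: star_compl_projection)
  obtain b1: "b = (1 - p) * b * (1 - q)" and b2: "(1 - q) * a * (1 - p) * b = 1 - q"
    using assms(3) unfolding is_right_pq_inverse_def by blast
  have "star b = (1 - q) * star b * (1 - p)"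
    using arg_cong[OF b1, of star] s by (simp add: star_mult mult.assoc)
  moreover have "star b * (1 - p) * star a * (1 - q) = 1 - q"
    using arg_cong[OF b2, of star] s by (simp add: star_mult mult.assoc)
  ultimately show ?thesis
    unfolding is_left_pq_inverse_def by blast
qed

lemma pq_inverse_of_left_inverses:
  assumes "is_projection p" "is_projection q"
    and "is_left_pq_inverse a p q b" "is_left_pq_inverse (star a) q p b'"
  shows "is_pq_inverse a p q b"
proof -
  have "is_right_pq_inverse a p q (star b')"
    using right_pq_inverse_star[OF assms(2,1,4)] by (simp add: star_star)
  then have "b = star b'"
    using left_right_pq_inverse_eq assms(1-3) by blast
  then show ?thesis
    using assms(3) \<open>is_right_pq_inverse a p q (star b')\<close> is_pq_inverse_iff_left_right by blast
qed

lemma left_pq_inverse_perturb: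
  assumes "is_projection p" "is_projection q" "is_left_pq_inverse a p q b"
    and small: "norm b * norm c < 1"
  obtains b1 where "is_left_pq_inverse (a + c) p q b1" "norm b1 \<le> norm b / (1 - norm b * norm c)"
proof -
  define P Q where "P = 1 - p" and "Q = 1 - q"
  have PQ: "P * P = P" "Q * Q = Q"
    unfolding P_def Q_def using assms(1,2) by (simp_all add: projection_compl_idem)
  have b: "b = P * b * Q" "b * Q * a * P = P"
    using assms(3) unfolding is_left_pq_inverse_def P_def Q_def by simp_all
  have Pb: "P * b = b" and bQ: "b * Q = b"
    using corner_absorb[OF PQ b(1)] by simp_all
  have "norm (b * c) < 1"
    using norm_mult_ineq[of b c] small by linarith
  then obtain z where z: "(1 + b * c) * z = 1" "z * (1 + b * c) = 1"
    and norm_z: "norm z \<le> 1 / (1 - norm (b * c))"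
    by (rule neumann_series_inverse)
  have pz: "p * z = p"
  proof -
    have "p * z = p * (1 + b * c) * z"
      using Pb by (simp add: P_def algebra_simps mult.assoc[symmetric])
    then show ?thesis
      using z(1) by (simp add: mult.assoc)
  qed
  define b1 where "b1 = z * b"
  have "P * b1 = b1"
    using pz Pb unfolding b1_def P_def by (simp add: algebra_simps mult.assoc[symmetric])
  then have "b1 = P * b1 * Q"
    unfolding b1_def using bQ by (metis mult.assoc)
  moreover have "b1 * Q * (a + c) * P = P"
  proof -
    have "b * Q * (a + c) * P = (1 + b * c) * P"
      using b(2) bQ by (simp add: algebra_simps)
    then have "b1 * Q * (a + c) * P = z * ((1 + b * c) * P)"
      unfolding b1_def by (simp add: mult.assoc)
    then show ?thesis
      using z(2) by (simp add: mult.assoc[symmetric])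
  qed
  moreover have "norm b1 \<le> norm b / (1 - norm b * norm c)"
  proof -
    have "norm b1 \<le> norm z * norm b"
      unfolding b1_def by (rule norm_mult_ineq)
    also have "\<dots> \<le> 1 / (1 - norm (b * c)) * norm b"
      using norm_z by (intro mult_right_mono) auto
    also have "\<dots> \<le> 1 / (1 - norm b * norm c) * norm b"
      using norm_mult_ineq[of b c] small by (intro mult_right_mono divide_left_mono) auto
    finally show ?thesis by simp
  qed
  ultimately show ?thesis
    using that unfolding is_left_pq_inverse_def P_def Q_def by blast
qed

lemma pq_inverse_perturb:
  assumes "is_projection p" "is_projection q" "is_pq_inverse a p q b"
    and small: "norm b * norm c < 1"
  obtains b1 where "is_pq_inverse (a + c) p q b1" "norm b1 \<le> norm b / (1 - norm b * norm c)"
proof -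
  obtain b1 where b1: "is_left_pq_inverse (a + c) p q b1"
      "norm b1 \<le> norm b / (1 - norm b * norm c)"
    using left_pq_inverse_perturb assms is_pq_inverse_iff_left_right by metis
  have "is_left_pq_inverse (star a) q p (star b)"
    using left_pq_inverse_star assms(1-3) is_pq_inverse_iff_left_right by blast
  moreover have "norm (star b) * norm (star c) < 1"
    using small by simp
  ultimately obtain b2 where "is_left_pq_inverse (star (a + c)) q p b2"
    using left_pq_inverse_perturb[OF assms(2,1)] by (metis star_add)
  then show ?thesis
    using that pq_inverse_of_left_inverses assms(1,2) b1 by blast
qed

lemma norm_mult_compl_projection_le:
  assumes "is_projection p'"
  shows "norm (p * (1 - p')) \<le> norm (p - p')"
proof -
  have "p * (1 - p') = (p - p') * (1 - p')"
    using assms by (simp add: is_projection_def algebra_simps)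
  then show ?thesis
    using norm_mult_le_right_of_norm_le_one norm_projection_le_one is_projection_compl assms
    by metis
qed

lemma norm_compression_projection:
  assumes "is_projection p" "is_projection e"
  shows "norm (e * p * e) = (norm (p * e))\<^sup>2"
proof -
  have "star (p * e) * (p * e) = e * (p * p) * e"
    using assms unfolding is_projection_def by (metis star_mult mult.assoc)
  then have "star (p * e) * (p * e) = e * p * e"
    using assms(1) unfolding is_projection_def by simp
  then show ?thesis
    by (metis cstar_identity)
qed

lemma norm_compressed_product_diff_le:
  assumes p: "is_projection p" and p': "is_projection p'" and q': "is_projection q'"
    and b: "is_left_pq_inverse a p q b"
  shows "norm ((1 - p') * b * (1 - q') * a * (1 - p') - (1 - p'))
    \<le> (norm (p - p'))\<^sup>2 + norm a * norm b * (norm (p - p') + norm (q - q'))"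
proof -
  define P P' Q' where "P = 1 - p" and "P' = 1 - p'" and "Q' = 1 - q'"
  have contractions: "norm P \<le> 1" "norm P' \<le> 1" "norm Q' \<le> 1"
    unfolding P_def P'_def Q'_def using p p' q'
    by (simp_all add: norm_projection_le_one is_projection_compl)
  have P'_idem: "P' * P' = P'"
    unfolding P'_def using p' by (rule projection_compl_idem)
  have "b * (1 - q) * a * P = P"
    using b unfolding is_left_pq_inverse_def P_def by simp
  then have "P' * b * (1 - q) * a * P * P' = P' * P * P'"
    by (metis mult.assoc)
  also have "\<dots> = P' - P' * p * P'"
    using P'_idem by (simp add: P_def algebra_simps)
  \<comment> \<open>split \<open>Q' = (1 - q) + (q - q')\<close> and \<open>P' = P P' + p P'\<close>\<close>
  finally have "P' * b * Q' * a * P' - P'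
      = - (P' * p * P') + P' * (b * (q - q') * a * P) * P' + (P' * b * Q') * a * (p * P')"
    unfolding P_def Q'_def by (simp add: algebra_simps)
  moreover have "norm (P' * p * P') \<le> (norm (p - p'))\<^sup>2"
    using norm_compression_projection[OF p is_projection_compl[OF p']]
      norm_mult_compl_projection_le[OF p']
    unfolding P'_def by (simp add: power_mono)
  moreover have "norm (P' * (b * (q - q') * a * P) * P') \<le> norm a * norm b * norm (q - q')"
  proof -
    have "norm (P' * (b * (q - q') * a * P) * P') \<le> norm (b * (q - q') * a)"
      using norm_mult_contractions_le norm_mult_le_right_of_norm_le_one contractions
      by (meson order_trans)
    also have "\<dots> \<le> norm b * norm (q - q') * norm a"
      by (meson mult_right_mono norm_ge_zero norm_mult_ineq order_trans)
    finally show ?thesis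
      by (simp add: algebra_simps)
  qed
  moreover have "norm ((P' * b * Q') * a * (p * P')) \<le> norm a * norm b * norm (p - p')"
  proof -
    have "norm ((P' * b * Q') * a * (p * P')) \<le> norm (P' * b * Q') * norm a * norm (p * P')"
      by (meson mult_right_mono norm_ge_zero norm_mult_ineq order_trans)
    also have "\<dots> \<le> norm b * norm a * norm (p - p')"
      using norm_mult_contractions_le[OF contractions(2,3)] norm_mult_compl_projection_le[OF p']
      unfolding P'_def by (intro mult_mono) auto
    finally show ?thesis
      by (simp add: algebra_simps)
  qed
  ultimately show ?thesis
    unfolding P'_def Q'_def
    by (smt (verit, ccfv_threshold) norm_minus_cancel norm_triangle_ineq distrib_left)
qed

lemma left_pq_inverse_near_projections:
  assumes proj: "is_projection p" "is_projection p'" "is_projection q'"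
    and b: "is_left_pq_inverse a p q b"
    and near_p: "norm (p - p') < 1/2"
    and near: "norm a * norm b * (norm (p - p') + norm (q - q')) < 1/4"
  obtains b' where "is_left_pq_inverse a p' q' b'" "norm b' \<le> 2 * norm b"
proof -
  define P' Q' where "P' = 1 - p'" and "Q' = 1 - q'"
  have P': "P' * P' = P'" "norm P' \<le> 1" and Q': "Q' * Q' = Q'" "norm Q' \<le> 1"
    unfolding P'_def Q'_def using proj(2,3)
    by (simp_all add: projection_compl_idem norm_projection_le_one is_projection_compl)
  define x where "x = P' * b * Q' * a * P'"
  have x: "P' * x = x" "x * P' = x"
    unfolding x_def using P'(1) by (metis mult.assoc)+
  have "(norm (p - p'))\<^sup>2 < (1/2)\<^sup>2"
    using near_p by (intro power_strict_mono) auto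
  then have "(norm (p - p'))\<^sup>2 < 1/4"
    by (simp add: power_divide)
  then have close: "norm (x - P') < 1/2"
    using norm_compressed_product_diff_le[OF proj b] near unfolding x_def P'_def Q'_def by linarith
  then have "norm (x - P') < 1"
    by linarith
  then obtain y where y: "y * x = P'" "P' * y = y" "y * P' = y"
    and "norm y \<le> 1 / (1 - norm (x - P'))"
    by (rule corner_left_inverse[OF P' x])
  moreover have "1 / (1 - norm (x - P')) \<le> 2"
    using close by (simp add: field_simps)
  ultimately have norm_y: "norm y \<le> 2"
    by linarith
  define b' where "b' = y * b * Q'"
  have "b' = P' * b' * Q'"
    unfolding b'_def using y(2) Q'(1) by (metis mult.assoc)
  moreover have "b' * Q' * a * P' = P'"
  proof -
    have "b' * Q' * a * P' = (y * P') * b * Q' * a * P'"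
      unfolding b'_def using Q'(1) y(3) by (simp add: mult.assoc)
    also have "\<dots> = y * x"
      unfolding x_def by (simp add: mult.assoc)
    finally show ?thesis
      using y(1) by simp
  qed
  ultimately have "is_left_pq_inverse a p' q' b'"
    unfolding is_left_pq_inverse_def P'_def Q'_def by (rule conjI)
  moreover have "norm b' \<le> 2 * norm b"
  proof -
    have "norm b' \<le> norm (y * b)"
      unfolding b'_def using Q'(2) by (rule norm_mult_le_right_of_norm_le_one)
    also have "\<dots> \<le> norm y * norm b"
      by (rule norm_mult_ineq)
    also have "\<dots> \<le> 2 * norm b"
      using norm_y by (simp add: mult_right_mono)
    finally show ?thesis .
  qed
  ultimately show ?thesis
    by (rule that)
qed

lemma pq_inverse_near_projections:
  assumes proj: "is_projection p" "is_projection q" "is_projection p'" "is_projection q'"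
    and b: "is_pq_inverse a p q b"
    and near_p: "norm (p - p') < 1/2" and near_q: "norm (q - q') < 1/2"
    and near: "norm a * norm b * (norm (p - p') + norm (q - q')) < 1/4"
  obtains b' where "is_pq_inverse a p' q' b'" "norm b' \<le> 2 * norm b"
proof -
  obtain b' where b': "is_left_pq_inverse a p' q' b'" "norm b' \<le> 2 * norm b"
    using left_pq_inverse_near_projections[OF proj(1,3,4) _ near_p near] b is_pq_inverse_iff_left_right
    by blast
  have "is_left_pq_inverse (star a) q p (star b)"
    using left_pq_inverse_star proj(1,2) b is_pq_inverse_iff_left_right by blast
  moreover have "norm (star a) * norm (star b) * (norm (q - q') + norm (p - p')) < 1/4"
    using near by (simp add: add.commute)
  ultimately obtain b'' where "is_left_pq_inverse (star a) q' p' b''"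
    using left_pq_inverse_near_projections[OF proj(2,4,3) _ near_q] by blast
  then show ?thesis
    using that pq_inverse_of_left_inverses proj(3,4) b' by blast
qed

lemma abs_alpha_coeff_le_one: "\<bar>alpha_coeff n\<bar> \<le> 1"
proof (induction n)
  case 0
  then show ?case by (simp add: alpha_coeff_def)
next
  case (Suc k)
  have "real (Suc k) * alpha_coeff (Suc k) = - (real k + 1/2) * alpha_coeff k"
    using gbinomial_mult_1[of "-1/2::real" k] unfolding alpha_coeff_def by (simp add: algebra_simps)
  then have "\<bar>real (Suc k) * alpha_coeff (Suc k)\<bar> = \<bar>(real k + 1/2) * alpha_coeff k\<bar>"
    by (metis abs_minus_cancel mult_minus_left)
  then have "real (Suc k) * \<bar>alpha_coeff (Suc k)\<bar> = (real k + 1/2) * \<bar>alpha_coeff k\<bar>"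
    by (simp only: abs_mult abs_of_nat abs_of_nonneg[of "real k + 1/2"])
  also have "\<dots> \<le> real k + 1/2"
    using Suc.IH by (intro mult_left_le) auto
  also have "\<dots> \<le> real (Suc k)"
    by simp
  finally show ?case
    by simp
qed

lemma C_const_ge_two: "C_const \<ge> 2"
proof -
  have "summable (\<lambda>n. \<bar>alpha_coeff (Suc n)\<bar> * (1/2::real) ^ n)"
    by (rule summable_comparison_test'[where g = "\<lambda>n. (1/2) ^ n" and N = 0])
      (auto intro: mult_right_le_one_le simp: abs_alpha_coeff_le_one)
  then have "0 \<le> (\<Sum>n. \<bar>alpha_coeff (Suc n)\<bar> * (1/2::real) ^ n)"
    by (rule suminf_nonneg) simp
  then show ?thesis
    unfolding C_const_def by simp
qed

lemma less_eighth_if_C_const_bound: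
  fixes t :: real
  assumes "4 * C_const * t < 1" "0 \<le> t"
  shows "t < 1/8"
proof -
  have "8 * t \<le> 4 * C_const * t"
    using C_const_ge_two assms(2) by (intro mult_right_mono) auto
  then show ?thesis
    using assms(1) by linarith
qed

theorem mainTheorem8:
  fixes a b p q :: "'a::cstar_algebra"
  assumes "is_projection p" and "is_projection q"
    and "invertible_upto a p q" and "is_pq_inverse a p q b"
  shows "(\<forall>c. norm b * norm c < 1 \<longrightarrow>
            invertible_upto (a + c) p q \<and>
            (\<forall>b1. is_pq_inverse (a + c) p q b1 \<longrightarrow>
                  norm b1 \<le> norm b / (1 - norm b * norm c)))
       \<and> (\<forall>p' q'. is_projection p' \<and> is_projection q' \<and>
            norm (p - p') < 1/2 \<and> norm (q - q') < 1/2 \<and>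
            4 * C_const * norm a * norm b * norm (p - p') < 1 \<and>
            4 * C_const * norm a * norm b * norm (q - q') < 1 \<longrightarrow>
            invertible_upto a p' q' \<and>
            (\<forall>b'. is_pq_inverse a p' q' b' \<longrightarrow> norm b' \<le> 2 * norm b))"
proof (intro conjI allI impI)
  fix c :: 'a
  assume "norm b * norm c < 1"
  then obtain b1 where b1: "is_pq_inverse (a + c) p q b1" "norm b1 \<le> norm b / (1 - norm b * norm c)"
    using pq_inverse_perturb assms(1,2,4) by blast
  then show "invertible_upto (a + c) p q"
    unfolding invertible_upto_def by blast
  show "norm b2 \<le> norm b / (1 - norm b * norm c)" if "is_pq_inverse (a + c) p q b2" for b2
    using pq_inverse_unique[OF assms(1,2) that b1(1)] b1(2) by simp
next
  fix p' q' :: 'a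
  assume h: "is_projection p' \<and> is_projection q' \<and>
    norm (p - p') < 1/2 \<and> norm (q - q') < 1/2 \<and>
    4 * C_const * norm a * norm b * norm (p - p') < 1 \<and>
    4 * C_const * norm a * norm b * norm (q - q') < 1"
  then have "norm a * norm b * norm (p - p') < 1/8" "norm a * norm b * norm (q - q') < 1/8"
    using less_eighth_if_C_const_bound[of "norm a * norm b * norm (p - p')"]
      less_eighth_if_C_const_bound[of "norm a * norm b * norm (q - q')"]
    by (simp_all add: mult.assoc)
  then have "norm a * norm b * (norm (p - p') + norm (q - q')) < 1/4"
    by (simp add: distrib_left)
  then obtain b' where b': "is_pq_inverse a p' q' b'" "norm b' \<le> 2 * norm b"
    using pq_inverse_near_projections assms(1,2,4) h by blast
  then show "invertible_upto a p' q'"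
    unfolding invertible_upto_def by blast
  show "norm b'' \<le> 2 * norm b" if "is_pq_inverse a p' q' b''" for b''
    using pq_inverse_unique[of p' q' a b'' b'] h that b' by simp
qed

end
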